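(* Let $G$ be a graph and let $v$ be a cut vertex of $G$ which decomposes $G$ into $G_1=G(V_1)$ and $H=G(U)$, where $H$ is a cycle. Let $f$ be a divisor on $G$. If $f_{N(H)}$ is bad, then $\rho_G(f)=\rho_{G_1}(f_{G/H}-\epsilon_v)$.
   Context: Graphs are finite, undirected, connected, loopless, possibly with multiple edges; $G(W)$ is the induced subgraph on $W$. A cycle is a connected graph with at least two vertices, all of degree $2$. A vertex $v$ is a cut vertex if removing it disconnects $G$; it decomposes $G$ into $G_1=G(V_1)$ and $H=G(U)$ if $V(G)=V_1\cup U$, $V_1\cap U=\{v\}$, both induced subgraphs are connected, and no edge joins $V_1\setminus\{v\}$ to $U\setminus\{v\}$. A divisor is a function $V\to\mathbb{Z}$, $\deg(f)=\sum f(u)$; $\epsilon_v$ is the divisor with value $1$ at $v$ and $0$ elsewhere. Contraction: $f_{G/H}$ is the divisor on $G_1$ with $f_{G/H}(u)=f(u)$ for $u\in V_1\setminus\{v\}$, $f_{G/H}(v)=\sum_{u\in U}f(u)$. Zero: $f_{N(H)}$ is the divisor on $H$ with $f_{N(H)}(u)=f(u)$ for $u\in U\setminus\{v\}$ and $f_{N(H)}(v)=-\sum_{u\in U\setminus\{v\}}f(u)$ (so $\deg f_{N(H)}=0$). Laplacian $\Delta_X(u,u)=\deg(u)$, $\Delta_X(u,w)=-e(u,w)$ for $u\ne w$; $f\sim g$ on $X$ if $g=f+x\Delta_X$, $x$ integral. Effective: all values $\ge0$; L-effective: equivalent to an effective divisor. A degree-$0$ divisor on the cycle $H$ is good if it is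 L-effective on $H$, bad otherwise. The rank $\rho_X(f)$ on a graph $X$ is $-1$ if $f$ is not L-effective on $X$, otherwise the largest $r\ge0$ with $f-\lambda$ L-effective on $X$ for all effective $\lambda$ of degree $r$ on $X$. *)

theory Defs
  imports Main
begin

text \<open>A multigraph on vertex set V is given by an edge-multiplicity function
  e :: 'a => 'a => nat (e u w = number of edges between u and w).
  Subgraph notions are taken relative to a vertex set W (induced subgraph G(W)).\<close>

definition multigraph :: "'a set \<Rightarrow> ('a \<Rightarrow> 'a \<Rightarrow> nat) \<Rightarrow> bool" where
  "multigraph V e \<longleftrightarrow> finite V \<and> (\<forall>u w. e u w = e w u) \<and> (\<forall>u. e u u = 0)
     \<and> (\<forall>u w. e u w > 0 \<longrightarrow> u \<in> V \<and> w \<in> V)"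

definition adj_in :: "('a \<Rightarrow> 'a \<Rightarrow> nat) \<Rightarrow> 'a set \<Rightarrow> 'a \<Rightarrow> 'a \<Rightarrow> bool" where
  "adj_in e W u w \<longleftrightarrow> u \<in> W \<and> w \<in> W \<and> e u w > 0"

definition connected_in :: "('a \<Rightarrow> 'a \<Rightarrow> nat) \<Rightarrow> 'a set \<Rightarrow> bool" where
  "connected_in e W \<longleftrightarrow> W \<noteq> {} \<and> (\<forall>u\<in>W. \<forall>w\<in>W. (adj_in e W)\<^sup>*\<^sup>* u w)"

definition deg_in :: "('a \<Rightarrow> 'a \<Rightarrow> nat) \<Rightarrow> 'a set \<Rightarrow> 'a \<Rightarrow> nat" where
  "deg_in e W u = (\<Sum>w\<in>W - {u}. e u w)"

definition is_cycle :: "('a \<Rightarrow> 'a \<Rightarrow> nat) \<Rightarrow> 'a set \<Rightarrow> bool" where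
  "is_cycle e W \<longleftrightarrow> connected_in e W \<and> card W \<ge> 2 \<and> (\<forall>u\<in>W. deg_in e W u = 2)"

definition is_cut_vertex :: "('a \<Rightarrow> 'a \<Rightarrow> nat) \<Rightarrow> 'a set \<Rightarrow> 'a \<Rightarrow> bool" where
  "is_cut_vertex e V v \<longleftrightarrow> v \<in> V \<and> \<not> connected_in e (V - {v})"

definition decomposes :: "('a \<Rightarrow> 'a \<Rightarrow> nat) \<Rightarrow> 'a set \<Rightarrow> 'a \<Rightarrow> 'a set \<Rightarrow> 'a set \<Rightarrow> bool" where
  "decomposes e V v V1 U \<longleftrightarrow> V = V1 \<union> U \<and> V1 \<inter> U = {v}
     \<and> connected_in e V1 \<and> connected_in e U
     \<and> (\<forall>a\<in>V1 - {v}. \<forall>b\<in>U - {v}. e a b = 0)"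

type_synonym 'a divisor = "'a \<Rightarrow> int"

definition div_deg :: "'a set \<Rightarrow> 'a divisor \<Rightarrow> int" where
  "div_deg W f = (\<Sum>u\<in>W. f u)"

definition eps :: "'a \<Rightarrow> 'a divisor" where
  "eps v = (\<lambda>u. if u = v then 1 else 0)"

definition laplacian :: "('a \<Rightarrow> 'a \<Rightarrow> nat) \<Rightarrow> 'a set \<Rightarrow> 'a \<Rightarrow> 'a \<Rightarrow> int" where
  "laplacian e W u w = (if u = w then int (deg_in e W u) else - int (e u w))"

definition lin_equiv :: "('a \<Rightarrow> 'a \<Rightarrow> nat) \<Rightarrow> 'a set \<Rightarrow> 'a divisor \<Rightarrow> 'a divisor \<Rightarrow> bool" where
  "lin_equiv e W f g \<longleftrightarrow>
     (\<exists>x :: 'a \<Rightarrow> int. \<forall>w\<in>W. g w = f w + (\<Sum>u\<in>W. x u * laplacian e W u w))"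

definition effective :: "'a set \<Rightarrow> 'a divisor \<Rightarrow> bool" where
  "effective W f \<longleftrightarrow> (\<forall>u\<in>W. f u \<ge> 0)"

definition L_effective :: "('a \<Rightarrow> 'a \<Rightarrow> nat) \<Rightarrow> 'a set \<Rightarrow> 'a divisor \<Rightarrow> bool" where
  "L_effective e W f \<longleftrightarrow> (\<exists>g. lin_equiv e W f g \<and> effective W g)"

definition rank :: "('a \<Rightarrow> 'a \<Rightarrow> nat) \<Rightarrow> 'a set \<Rightarrow> 'a divisor \<Rightarrow> int" where
  "rank e W f = (if \<not> L_effective e W f then -1
     else int (GREATEST r::nat. \<forall>lam. effective W lam \<and> div_deg W lam = int r
                                   \<longrightarrow> L_effective e W (\<lambda>u. f u - lam u)))"

text \<open>Contraction f_{G/H} (a divisor on G_1) and zero f_{N(H)} (a divisor on H).\<close>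
definition contract_div :: "'a set \<Rightarrow> 'a \<Rightarrow> 'a divisor \<Rightarrow> 'a divisor" where
  "contract_div U v f = (\<lambda>u. if u = v then (\<Sum>w\<in>U. f w) else f u)"

definition zero_div :: "'a set \<Rightarrow> 'a \<Rightarrow> 'a divisor \<Rightarrow> 'a divisor" where
  "zero_div U v f = (\<lambda>u. if u = v then - (\<Sum>w\<in>U - {v}. f w) else f u)"

definition bad :: "('a \<Rightarrow> 'a \<Rightarrow> nat) \<Rightarrow> 'a set \<Rightarrow> 'a divisor \<Rightarrow> bool" where
  "bad e U f \<longleftrightarrow> \<not> L_effective e U f"

end

theory Submission
  imports Defs
begin

text \<open>A cycle has genus one, so every
  divisor of degree one on it is L-effective; this is the usual energy
  argument with q-reduced divisors, where a set that can fire is found by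
  counting the edges leaving it. Gluing firing scripts along the cut vertex v
  then shows that f is L-effective on G iff f_{G/H} - \<epsilon>_v is L-effective on G_1,
  the direction from G to G_1 being exactly where badness of f_{N(H)} enters.
  Subtracting an effective divisor supported on G_1 does not change f_{N(H)},
  and contraction preserves effectivity and degree, so the two ranks agree.\<close>

section \<open>Firing scripts\<close>

definition lap :: "('a \<Rightarrow> 'a \<Rightarrow> nat) \<Rightarrow> 'a set \<Rightarrow> ('a \<Rightarrow> int) \<Rightarrow> 'a \<Rightarrow> int" where
  "lap e W x w = (\<Sum>u\<in>W. int (e u w) * (x w - x u))"

lemma lap_cong: "(\<And>u. u \<in> W \<Longrightarrow> x u = y u) \<Longrightarrow> w \<in> W \<Longrightarrow> lap e W x w = lap e W y w"
  unfolding lap_def by simp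

lemma lap_add: "lap e W (\<lambda>u. x u + y u) w = lap e W x w + lap e W y w"
  unfolding lap_def by (simp add: sum.distrib[symmetric] algebra_simps)

lemma lap_diff: "lap e W (\<lambda>u. x u - y u) w = lap e W x w - lap e W y w"
  unfolding lap_def by (simp add: sum_subtractf[symmetric] algebra_simps)

lemma lap_mult: "lap e W (\<lambda>u. c * x u) w = c * lap e W x w"
  unfolding lap_def by (simp add: sum_distrib_left algebra_simps)

lemma lap_add_const: "lap e W (\<lambda>u. x u + c) w = lap e W x w"
  unfolding lap_def by simp

lemma lap_of_bool_ge: "- (\<Sum>u\<in>W. int (e u w)) \<le> lap e W (\<lambda>u. of_bool (u \<in> B)) w"
  unfolding lap_def sum_negf[symmetric] by (intro sum_mono) auto

lemma lap_of_bool_nonpos: "w \<notin> B \<Longrightarrow> lap e W (\<lambda>u. of_bool (u \<in> B)) w \<le> 0"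
  unfolding lap_def by (intro sum_nonpos) auto

lemma L_effective_cong:
  "(\<And>w. w \<in> W \<Longrightarrow> f w = g w) \<Longrightarrow> L_effective e W f \<longleftrightarrow> L_effective e W g"
  unfolding L_effective_def lin_equiv_def by simp

locale undirected =
  fixes e :: "'a \<Rightarrow> 'a \<Rightarrow> nat"
  assumes sym: "e u w = e w u"
begin

lemma sum_laplacian_eq_lap:
  assumes "finite W" "w \<in> W"
  shows "(\<Sum>u\<in>W. x u * laplacian e W u w) = lap e W x w"
proof -
  have "(\<Sum>u\<in>W. x u * laplacian e W u w)
      = x w * (\<Sum>u\<in>W-{w}. int (e u w)) - (\<Sum>u\<in>W-{w}. x u * int (e u w))"
    using assms by (simp add: sum.remove laplacian_def deg_in_def sym sum_negf)
  also have "\<dots> = lap e W x w"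
    using assms by (simp add: lap_def sum.remove sum_distrib_left sum_subtractf[symmetric] algebra_simps)
  finally show ?thesis .
qed

lemma L_effective_iff_lap:
  "finite W \<Longrightarrow> L_effective e W f \<longleftrightarrow> (\<exists>x. \<forall>w\<in>W. 0 \<le> f w + lap e W x w)"
proof
  assume "L_effective e W f"
  then obtain g x where "\<forall>w\<in>W. g w = f w + (\<Sum>u\<in>W. x u * laplacian e W u w)" "\<forall>w\<in>W. 0 \<le> g w"
    unfolding L_effective_def lin_equiv_def effective_def by blast
  moreover assume "finite W"
  ultimately show "\<exists>x. \<forall>w\<in>W. 0 \<le> f w + lap e W x w"
    by (metis sum_laplacian_eq_lap)
next
  assume "finite W" and "\<exists>x. \<forall>w\<in>W. 0 \<le> f w + lap e W x w"
  then obtain x where "\<forall>w\<in>W. 0 \<le> f w + lap e W x w" by blast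
  with \<open>finite W\<close> show "L_effective e W f"
    unfolding L_effective_def lin_equiv_def effective_def
    by (intro exI[of _ "\<lambda>w. f w + lap e W x w"]) (auto simp: sum_laplacian_eq_lap)
qed

lemma sum_mult_lap_commute: "(\<Sum>w\<in>W. a w * lap e W b w) = (\<Sum>w\<in>W. b w * lap e W a w)"
proof -
  have swap: "(\<Sum>w\<in>W. \<Sum>u\<in>W. int (e u w) * a w * b u) = (\<Sum>w\<in>W. \<Sum>u\<in>W. int (e u w) * b w * a u)"
    by (subst sum.swap) (simp add: sym algebra_simps)
  show ?thesis
    unfolding lap_def using swap
    by (simp add: sum_distrib_left sum_subtractf algebra_simps)
qed

lemma sum_lap_eq_0: "(\<Sum>w\<in>W. lap e W x w) = 0"
  using sum_mult_lap_commute[where a = "\<lambda>_. 1" and b = x and W = W] by (simp add: lap_def)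

lemma lap_of_bool_mem:
  assumes "finite W" "w \<in> B"
  shows "lap e W (\<lambda>u. of_bool (u \<in> B)) w = (\<Sum>u\<in>W-B. int (e w u))"
proof -
  have "lap e W (\<lambda>u. of_bool (u \<in> B)) w = (\<Sum>u\<in>W. if u \<in> W - B then int (e w u) else 0)"
    unfolding lap_def using assms(2) by (intro sum.cong) (auto simp: sym)
  also have "\<dots> = (\<Sum>u\<in>W-B. int (e w u))"
    using assms(1) by (simp add: sum.inter_filter set_diff_eq)
  finally show ?thesis .
qed

end

section \<open>Degree-one divisors on a cycle\<close>

lemma is_cycle_finite: "is_cycle e U \<Longrightarrow> finite U"
  unfolding is_cycle_def by (metis card.infinite not_numeral_le_zero)

lemma rtranclp_leaves_set:
  assumes "r\<^sup>*\<^sup>* a b" "a \<in> R" "b \<notin> R"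
  shows "\<exists>x y. x \<in> R \<and> y \<notin> R \<and> r x y"
  using assms by (induction rule: rtranclp_induct) auto

definition partial_potential ::
    "('a \<Rightarrow> 'a \<Rightarrow> nat) \<Rightarrow> 'a set \<Rightarrow> 'a \<Rightarrow> 'a set \<Rightarrow> ('a \<Rightarrow> int) \<Rightarrow> int \<Rightarrow> bool" where
  "partial_potential e U q R p c \<longleftrightarrow> q \<in> R \<and> R \<subseteq> U \<and> (\<forall>u. 0 \<le> p u) \<and> p q = 0
     \<and> (\<forall>u\<in>R. p u < c) \<and> (\<forall>u\<in>U-R. p u = c) \<and> (\<forall>u\<in>R-{q}. 1 \<le> lap e U p u)"

lemma partial_potential_extend:
  assumes fin: "finite U" and conn: "connected_in e U"
    and pp: "partial_potential e U q R p c" and ne: "R \<noteq> U"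
  shows "\<exists>w p' c'. w \<in> U - R \<and> partial_potential e U q (insert w R) p' c'"
proof -
  have qR: "q \<in> R" and RU: "R \<subseteq> U" using pp unfolding partial_potential_def by auto
  obtain z where z: "z \<in> U - R" using ne RU by blast
  have "(adj_in e U)\<^sup>*\<^sup>* q z" using conn qR RU z unfolding connected_in_def by blast
  then obtain y w where y: "y \<in> R" and w: "w \<in> U - R" and yw: "0 < e y w"
    using rtranclp_leaves_set[of _ q z R] qR z unfolding adj_in_def by blast
  have step: "1 \<le> lap e U p w"
  proof -
    have "p u \<le> p w" if "u \<in> U" for u
      using pp w that unfolding partial_potential_def by (cases "u \<in> R") force+
    then have "\<forall>u\<in>U. 0 \<le> int (e u w) * (p w - p u)" by simp
    then have "int (e y w) * (p w - p y) \<le> lap e U p w"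
      unfolding lap_def using fin y RU by (intro member_le_sum) auto
    moreover have "1 \<le> p w - p y" using pp w y unfolding partial_potential_def by fastforce
    ultimately show ?thesis using yw by (smt (verit) mult_le_cancel_left1 of_nat_0_less_iff)
  qed
  text \<open>Lifting by the indicator of U - R' costs at most the total degree M at
    the vertices of R', which is repaid by scaling p by M + 1.\<close>
  define M where "M = (\<Sum>u\<in>U. \<Sum>v\<in>U. int (e u v))"
  define R' where "R' = insert w R"
  define p' where "p' u = (M + 1) * p u + of_bool (u \<in> U - R')" for u
  have M0: "0 \<le> M" unfolding M_def by (intro sum_nonneg) auto
  have degM: "(\<Sum>u\<in>U. int (e u x)) \<le> M" if "x \<in> U" for x
  proof -
    have "(\<Sum>u\<in>U. int (e u x)) \<le> (\<Sum>u\<in>U. \<Sum>v\<in>U. int (e u v))"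
      using fin that by (intro sum_mono member_le_sum) auto
    then show ?thesis unfolding M_def .
  qed
  have "partial_potential e U q R' p' ((M + 1) * c + 1)"
    unfolding partial_potential_def
  proof (intro conjI ballI allI)
    fix u assume u: "u \<in> R' - {q}"
    then have "1 \<le> lap e U p u" using pp step unfolding partial_potential_def R'_def by auto
    then have "M + 1 \<le> (M + 1) * lap e U p u" using M0 by simp
    moreover have "- M \<le> lap e U (\<lambda>u. of_bool (u \<in> U - R')) u"
    proof -
      have "u \<in> U" using u RU w unfolding R'_def by auto
      then show ?thesis
        using lap_of_bool_ge[where e = e and W = U and w = u and B = "U - R'"] degM[of u] by linarith
    qed
    ultimately show "1 \<le> lap e U p' u" unfolding p'_def lap_add lap_mult by linarith
  qed (use pp qR RU w M0 in \<open>auto simp: partial_potential_def p'_def R'_def\<close>)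
  then show ?thesis using w unfolding R'_def by blast
qed

lemma exists_potential:
  assumes fin: "finite U" and conn: "connected_in e U" and q: "q \<in> U"
  shows "\<exists>p. (\<forall>u. 0 \<le> p u) \<and> p q = 0 \<and> (\<forall>u\<in>U-{q}. 1 \<le> lap e U p u)"
proof -
  define P where "P R \<longleftrightarrow> (\<exists>p c. partial_potential e U q R p c)" for R
  have "P {q}"
    unfolding P_def partial_potential_def using q by (intro exI[of _ "\<lambda>u. of_bool (u \<noteq> q)"] exI[of _ 1]) auto
  moreover have "card R < Suc (card U)" if "P R" for R
    using that fin card_mono unfolding P_def partial_potential_def by (metis le_imp_less_Suc)
  ultimately obtain R where R: "P R" and max: "\<And>R'. P R' \<Longrightarrow> card R' \<le> card R"
    using ex_has_greatest_nat[of P "{q}" card "Suc (card U)"] by blast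
  obtain p c where pp: "partial_potential e U q R p c" using R unfolding P_def by blast
  have "R = U"
  proof (rule ccontr)
    assume "R \<noteq> U"
    then obtain w p' c' where "w \<in> U - R" "partial_potential e U q (insert w R) p' c'"
      using partial_potential_extend[OF fin conn pp] by blast
    moreover have "finite R" using pp fin finite_subset unfolding partial_potential_def by blast
    ultimately show False using max[of "insert w R"] unfolding P_def by auto
  qed
  then show ?thesis using pp unfolding partial_potential_def by auto
qed

definition can_fire :: "('a \<Rightarrow> 'a \<Rightarrow> nat) \<Rightarrow> 'a set \<Rightarrow> 'a divisor \<Rightarrow> 'a set \<Rightarrow> bool" where
  "can_fire e U g B \<longleftrightarrow> (\<forall>u\<in>B. (\<Sum>w\<in>U-B. int (e u w)) \<le> g u)"

context undirected
begin

lemma sum_le_cut_if_no_set_can_fire: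
  assumes fin: "finite U" and deg: "\<forall>u\<in>U. deg_in e U u = 2"
  shows "A \<subseteq> U \<Longrightarrow> (\<forall>B\<subseteq>A. B \<noteq> {} \<longrightarrow> \<not> can_fire e U g B)
     \<Longrightarrow> 2 * (\<Sum>u\<in>A. g u) \<le> (\<Sum>u\<in>A. \<Sum>w\<in>U-A. int (e u w))"
proof (induction "card A" arbitrary: A)
  case 0
  then have "A = {}" using fin by (metis finite_subset card_0_eq)
  then show ?case by simp
next
  case (Suc n)
  have finA: "finite A" using Suc.prems fin finite_subset by blast
  have "A \<noteq> {}" using Suc.hyps(2) by auto
  then obtain u where u: "u \<in> A" and gu: "g u < (\<Sum>w\<in>U-A. int (e u w))"
    using Suc.prems(2) unfolding can_fire_def by (auto simp: not_le)
  define A' where "A' = A - {u}"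
  have uU: "u \<in> U" using u Suc.prems(1) by auto
  have IH: "2 * (\<Sum>y\<in>A'. g y) \<le> (\<Sum>y\<in>A'. \<Sum>w\<in>U-A'. int (e y w))"
    unfolding A'_def using Suc.hyps(2) Suc.prems finA u by (intro Suc.hyps(1)) auto
  have "U - A' = insert u (U - A)" using uU u unfolding A'_def by auto
  then have out': "(\<Sum>y\<in>A'. \<Sum>w\<in>U-A'. int (e y w))
      = (\<Sum>y\<in>A'. \<Sum>w\<in>U-A. int (e y w)) + (\<Sum>y\<in>A'. int (e u y))"
    using fin u by (simp add: sum.distrib sym[of _ u])
  have "U - {u} = (U - A) \<union> A'" and "(U - A) \<inter> A' = {}"
    using Suc.prems(1) u unfolding A'_def by auto
  then have "int (deg_in e U u) = (\<Sum>w\<in>U-A. int (e u w)) + (\<Sum>y\<in>A'. int (e u y))"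
    unfolding deg_in_def using fin finA by (simp add: sum.union_disjoint A'_def)
  then have "(\<Sum>w\<in>U-A. int (e u w)) + (\<Sum>y\<in>A'. int (e u y)) = 2"
    using deg uU by simp
  moreover have "(\<Sum>y\<in>A. g y) = g u + (\<Sum>y\<in>A'. g y)"
    and "(\<Sum>y\<in>A. \<Sum>w\<in>U-A. int (e y w)) = (\<Sum>w\<in>U-A. int (e u w)) + (\<Sum>y\<in>A'. \<Sum>w\<in>U-A. int (e y w))"
    unfolding A'_def using finA u by (simp_all add: sum.remove)
  ultimately show ?case using IH out' gu by linarith
qed

text \<open>For a degree-one divisor with a negative value at q, the bound above applied
  to U - {q} fails, since the only edges leaving U - {q} are the two at q.\<close>
lemma exists_set_can_fire:
  assumes cyc: "is_cycle e U" and q: "q \<in> U"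
    and deg1: "(\<Sum>u\<in>U. g u) = 1" and neg: "g q < 0"
  shows "\<exists>B. B \<subseteq> U - {q} \<and> B \<noteq> {} \<and> can_fire e U g B"
proof (rule ccontr)
  assume none: "\<not> ?thesis"
  have fin: "finite U" using cyc by (rule is_cycle_finite)
  have deg: "\<forall>u\<in>U. deg_in e U u = 2" using cyc unfolding is_cycle_def by blast
  have "U - (U - {q}) = {q}" using q by auto
  then have "(\<Sum>u\<in>U-{q}. \<Sum>w\<in>U-(U-{q}). int (e u w)) = int (deg_in e U q)"
    by (simp add: deg_in_def sym)
  then have "2 * (\<Sum>u\<in>U-{q}. g u) \<le> 2"
    using sum_le_cut_if_no_set_can_fire[OF fin deg, of "U - {q}" g] none deg q by auto
  moreover have "(\<Sum>u\<in>U. g u) = g q + (\<Sum>u\<in>U-{q}. g u)" using fin q by (simp add: sum.remove)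
  ultimately show False using deg1 neg by linarith
qed

lemma sum_mult_lap_of_bool:
  assumes "finite W" "B \<subseteq> W"
  shows "(\<Sum>w\<in>W. p w * lap e W (\<lambda>u. of_bool (u \<in> B)) w) = (\<Sum>w\<in>B. lap e W p w)"
proof -
  have "(\<Sum>w\<in>W. p w * lap e W (\<lambda>u. of_bool (u \<in> B)) w) = (\<Sum>w\<in>W. of_bool (w \<in> B) * lap e W p w)"
    by (rule sum_mult_lap_commute)
  also have "\<dots> = (\<Sum>w\<in>W. if w \<in> B then lap e W p w else 0)"
    by (rule sum.cong) auto
  also have "\<dots> = (\<Sum>w\<in>B. lap e W p w)"
    using assms by (simp add: sum.inter_restrict[symmetric] Int_absorb1)
  finally show ?thesis .
qed

lemma nonneg_after_firing:
  assumes "finite W" and fire: "can_fire e W g B" and out: "w \<notin> B \<Longrightarrow> 0 \<le> g w"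
  shows "0 \<le> g w - lap e W (\<lambda>u. of_bool (u \<in> B)) w"
proof (cases "w \<in> B")
  case True
  then show ?thesis using fire lap_of_bool_mem[OF assms(1) True] unfolding can_fire_def by simp
next
  case False
  then show ?thesis using out lap_of_bool_nonpos[of w B e W] by simp
qed

lemma energy_after_firing:
  assumes "finite W" "B \<subseteq> W" "\<forall>w\<in>B. 1 \<le> lap e W p w"
  shows "(\<Sum>w\<in>W. (g w - lap e W (\<lambda>u. of_bool (u \<in> B)) w) * p w)
    \<le> (\<Sum>w\<in>W. g w * p w) - int (card B)"
proof -
  have "(\<Sum>w\<in>W. (g w - lap e W (\<lambda>u. of_bool (u \<in> B)) w) * p w)
      = (\<Sum>w\<in>W. g w * p w) - (\<Sum>w\<in>W. p w * lap e W (\<lambda>u. of_bool (u \<in> B)) w)"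
    by (simp add: algebra_simps sum_subtractf)
  also have "\<dots> = (\<Sum>w\<in>W. g w * p w) - (\<Sum>w\<in>B. lap e W p w)"
    using sum_mult_lap_of_bool[OF assms(1,2)] by simp
  also have "\<dots> \<le> (\<Sum>w\<in>W. g w * p w) - int (card B)"
    using assms(3) sum_mono[of B "\<lambda>_. 1" "lap e W p"] by simp
  finally show ?thesis .
qed

text \<open>Among the divisors equivalent to K and effective off q, one minimising the
  energy against a potential for q is effective at q as well: otherwise some
  set B \<subseteq> U - {q} can fire, and firing it lowers the energy.\<close>
theorem cycle_degree_one_L_effective:
  assumes cyc: "is_cycle e U" and deg1: "(\<Sum>u\<in>U. K u) = 1"
  shows "L_effective e U K"
proof -
  have fin: "finite U" using cyc by (rule is_cycle_finite)
  obtain q where q: "q \<in> U" using cyc unfolding is_cycle_def connected_in_def by blast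
  obtain p where p0: "\<forall>u. 0 \<le> p u" and pq: "p q = 0" and pot: "\<forall>u\<in>U-{q}. 1 \<le> lap e U p u"
    using exists_potential[OF fin _ q] cyc unfolding is_cycle_def by blast
  define admissible where "admissible x \<longleftrightarrow> (\<forall>w\<in>U-{q}. 0 \<le> K w + lap e U x w)" for x
  define energy where "energy x = (\<Sum>w\<in>U. (K w + lap e U x w) * p w)" for x
  have energy_nonneg: "0 \<le> energy x" if "admissible x" for x
    unfolding energy_def using that p0 pq unfolding admissible_def
    by (intro sum_nonneg) (metis DiffI mult_eq_0_iff mult_nonneg_nonneg singletonD)
  define N where "N = (\<Sum>u\<in>U. \<bar>K u\<bar>)"
  have "admissible (\<lambda>u. N * p u)"
    unfolding admissible_def lap_mult
  proof
    fix w assume w: "w \<in> U - {q}"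
    have "\<bar>K w\<bar> \<le> N" unfolding N_def using fin w by (intro member_le_sum) auto
    moreover have "N \<le> N * lap e U p w"
      using pot w \<open>\<bar>K w\<bar> \<le> N\<close> by (metis abs_ge_zero mult.right_neutral mult_left_mono order_trans)
    ultimately show "0 \<le> K w + N * lap e U p w" by linarith
  qed
  then obtain x where adm: "admissible x"
    and min: "\<And>y. admissible y \<Longrightarrow> nat (energy x) \<le> nat (energy y)"
    using ex_has_least_nat[of admissible _ "\<lambda>x. nat (energy x)"] by blast
  define g where "g w = K w + lap e U x w" for w
  have "0 \<le> g q"
  proof (rule ccontr)
    assume "\<not> 0 \<le> g q"
    then have neg: "g q < 0" by simp
    have "(\<Sum>w\<in>U. g w) = 1" using deg1 by (simp add: g_def sum.distrib sum_lap_eq_0)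
    then obtain B where B: "B \<subseteq> U - {q}" "B \<noteq> {}" and fire: "can_fire e U g B"
      using exists_set_can_fire[OF cyc q, of g] neg by blast
    define y where "y u = x u - of_bool (u \<in> B)" for u
    have lap_y: "K w + lap e U y w = g w - lap e U (\<lambda>u. of_bool (u \<in> B)) w" for w
      unfolding y_def lap_diff g_def by simp
    have "admissible y"
      unfolding admissible_def lap_y using adm B nonneg_after_firing[OF fin fire]
      unfolding admissible_def g_def by blast
    then have "energy x \<le> energy y"
      using min[of y] energy_nonneg[of y] by linarith
    moreover have "energy y \<le> energy x - int (card B)"
      unfolding energy_def lap_y g_def[symmetric] using energy_after_firing[OF fin] B pot by blast
    moreover have "0 < card B" using B fin by (meson card_gt_0_iff finite_Diff finite_subset)
    ultimately show False by linarith
  qed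
  then show ?thesis using adm fin unfolding admissible_def L_effective_iff_lap[OF fin] g_def by blast
qed

end

section \<open>Cutting at the cut vertex\<close>

lemma contract_div_diff:
  "contract_div U v (\<lambda>u. f u - g u) w = contract_div U v f w - contract_div U v g w"
  unfolding contract_div_def by (simp add: sum_subtractf)

locale cut_decomposition = undirected e for e :: "'a \<Rightarrow> 'a \<Rightarrow> nat" +
  fixes V V1 U :: "'a set" and v :: 'a
  assumes finite_V: "finite V" and V_eq: "V = V1 \<union> U" and V1_inter_U: "V1 \<inter> U = {v}"
    and no_edge: "\<forall>a\<in>V1 - {v}. \<forall>b\<in>U - {v}. e a b = 0"
begin

lemma finite_V1: "finite V1" and finite_U: "finite U" and v_in_V1: "v \<in> V1" and v_in_U: "v \<in> U"
  using finite_V V_eq V1_inter_U by auto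

lemma sum_V: "(\<Sum>u\<in>V. t u) = (\<Sum>u\<in>V1. t u) + (\<Sum>u\<in>U-{v}. t u)"
proof -
  have "V = V1 \<union> (U - {v})" and "V1 \<inter> (U - {v}) = {}" using V_eq V1_inter_U by auto
  then show ?thesis using finite_V1 finite_U by (simp add: sum.union_disjoint)
qed

lemma sum_U: "(\<Sum>u\<in>U. t u) = t v + (\<Sum>u\<in>U-{v}. t u)"
  using finite_U v_in_U by (simp add: sum.remove)

lemma lap_V_V1: "w \<in> V1 - {v} \<Longrightarrow> lap e V x w = lap e V1 x w"
  unfolding lap_def sum_V using no_edge sym by (force intro!: sum.neutral)

lemma lap_V_U: "w \<in> U - {v} \<Longrightarrow> lap e V x w = lap e U x w"
proof -
  assume w: "w \<in> U - {v}"
  have "(\<Sum>u\<in>V1. int (e u w) * (x w - x u)) = int (e v w) * (x w - x v)"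
    using finite_V1 v_in_V1 no_edge w by (subst sum.remove) (auto intro!: sum.neutral)
  then show ?thesis unfolding lap_def sum_V sum_U[of "\<lambda>u. int (e u w) * (x w - x u)"] by simp
qed

lemma lap_V_cut_vertex: "lap e V x v = lap e V1 x v + lap e U x v"
  unfolding lap_def sum_V sum_U[of "\<lambda>u. int (e u v) * (x v - x u)"] by simp

text \<open>If F = f + lap e V x \<ge> 0, the same script x on G_1 gives the contraction the
  value F v + \<Sum>(U - {v}) F - 1 at v. Were this negative, \<Sum>(U - {v}) F \<le> 0 and x
  would make f_{N(H)} effective on H.\<close>
lemma L_effective_contract_if_bad:
  assumes bad: "bad e U (zero_div U v f)" and eff: "L_effective e V f"
  shows "L_effective e V1 (\<lambda>u. contract_div U v f u - eps v u)"
proof -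
  obtain x where x: "\<forall>w\<in>V. 0 \<le> f w + lap e V x w"
    using eff unfolding L_effective_iff_lap[OF finite_V] by blast
  define F where "F w = f w + lap e V x w" for w
  have F_U: "F w = f w + lap e U x w" if "w \<in> U - {v}" for w
    using that lap_V_U unfolding F_def by simp
  have lap_U_v: "lap e U x v = - (\<Sum>w\<in>U-{v}. F w - f w)"
    using sum_lap_eq_0[of U x] F_U sum_U[of "lap e U x"] by simp
  have F_nonneg: "0 \<le> F w" if "w \<in> V" for w using x that unfolding F_def by blast
  have surplus: "1 \<le> F v + (\<Sum>w\<in>U-{v}. F w)"
  proof (rule ccontr)
    assume "\<not> ?thesis"
    then have "(\<Sum>w\<in>U-{v}. F w) \<le> 0" using F_nonneg[of v] v_in_U V_eq by auto
    then have "0 \<le> zero_div U v f w + lap e U x w" if "w \<in> U" for w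
    proof (cases "w = v")
      case True
      have "zero_div U v f v + lap e U x v = - (\<Sum>w\<in>U-{v}. F w)"
        using lap_U_v by (simp add: zero_div_def sum_subtractf)
      then show ?thesis using True \<open>(\<Sum>w\<in>U-{v}. F w) \<le> 0\<close> by simp
    next
      case False
      then show ?thesis using that F_nonneg[of w] F_U[of w] V_eq by (simp add: zero_div_def)
    qed
    then show False using bad finite_U unfolding bad_def L_effective_iff_lap[OF finite_U] by blast
  qed
  have "0 \<le> contract_div U v f w - eps v w + lap e V1 x w" if w: "w \<in> V1" for w
  proof (cases "w = v")
    case True
    have "contract_div U v f w - eps v w + lap e V1 x w = F v + (\<Sum>w\<in>U-{v}. F w) - 1"
      using True lap_V_cut_vertex[of x] sum_U[of f] lap_U_v
      by (simp add: contract_div_def eps_def F_def sum_subtractf sum.distrib)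
    then show ?thesis using surplus by simp
  next
    case False
    moreover have "w \<in> V" using w V_eq by blast
    ultimately show ?thesis using x w lap_V_V1[of w x] by (auto simp: contract_div_def eps_def)
  qed
  then show ?thesis unfolding L_effective_iff_lap[OF finite_V1] by blast
qed

text \<open>Conversely, a script y for the contraction on G_1 is glued to a script z making
  the degree-one divisor K on H effective; shifting z by a constant makes the two
  agree at v.\<close>
lemma L_effective_if_contract:
  assumes cyc: "is_cycle e U" and eff: "L_effective e V1 (\<lambda>u. contract_div U v f u - eps v u)"
  shows "L_effective e V f"
proof -
  obtain y where y: "\<forall>w\<in>V1. 0 \<le> contract_div U v f w - eps v w + lap e V1 y w"
    using eff unfolding L_effective_iff_lap[OF finite_V1] by blast
  define K where "K w = (if w = v then 1 - (\<Sum>u\<in>U-{v}. f u) else f w)" for w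
  have "(\<Sum>u\<in>U. K u) = 1"
    using sum_U[of K] by (simp add: K_def)
  then obtain z where z: "\<forall>w\<in>U. 0 \<le> K w + lap e U z w"
    using cycle_degree_one_L_effective[OF cyc] unfolding L_effective_iff_lap[OF finite_U] by blast
  define x where "x u = (if u \<in> U - {v} then z u + (y v - z v) else y u)" for u
  have x_V1: "lap e V1 x w = lap e V1 y w" if "w \<in> V1" for w
    using that V1_inter_U by (intro lap_cong) (auto simp: x_def)
  have x_U: "lap e U x w = lap e U z w" if "w \<in> U" for w
  proof -
    have "lap e U x w = lap e U (\<lambda>u. z u + (y v - z v)) w"
      using that by (intro lap_cong) (auto simp: x_def)
    then show ?thesis by (simp add: lap_add_const)
  qed
  have "0 \<le> f w + lap e V x w" if w: "w \<in> V" for w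
  proof -
    consider "w = v" | "w \<in> V1 - {v}" | "w \<in> U - {v}" using w V_eq by blast
    then show ?thesis
    proof cases
      case 1
      have "f w + lap e V x w
          = (contract_div U v f v - eps v v + lap e V1 y v) + (K v + lap e U z v)"
        using 1 lap_V_cut_vertex[of x] x_V1[OF v_in_V1] x_U[OF v_in_U] sum_U[of f]
        by (simp add: contract_div_def eps_def K_def)
      then show ?thesis using y z v_in_V1 v_in_U by (smt (verit))
    next
      case 2
      then show ?thesis using y lap_V_V1[of w x] x_V1[of w] by (auto simp: contract_div_def eps_def)
    next
      case 3
      then show ?thesis using z lap_V_U[of w x] x_U[of w] by (auto simp: K_def)
    qed
  qed
  then show ?thesis unfolding L_effective_iff_lap[OF finite_V] by blast
qed

lemma L_effective_iff_contract:
  assumes "is_cycle e U" and "bad e U (zero_div U v f)"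
  shows "L_effective e V f \<longleftrightarrow> L_effective e V1 (\<lambda>u. contract_div U v f u - eps v u)"
  using assms L_effective_contract_if_bad L_effective_if_contract by blast

lemma effective_contract: "effective V g \<Longrightarrow> effective V1 (contract_div U v g)"
  using V_eq unfolding effective_def contract_div_def by (auto intro: sum_nonneg)

lemma div_deg_contract: "div_deg V1 (contract_div U v g) = div_deg V g"
  using sum_U[of g] sum_V[of g] finite_V1 v_in_V1
  unfolding div_deg_def contract_div_def by (simp add: sum.remove)

lemma sum_extend_zero_U: "(\<Sum>u\<in>U-{v}. if u \<in> V1 then g u else 0) = 0"
  using V1_inter_U by (intro sum.neutral) auto

lemma contract_div_extend_zero:
  "w \<in> V1 \<Longrightarrow> contract_div U v (\<lambda>u. if u \<in> V1 then g u else 0) w = g w"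
  using sum_U[of "\<lambda>u. if u \<in> V1 then g u else 0"] sum_extend_zero_U v_in_V1
  unfolding contract_div_def by auto

lemma zero_div_minus_extend_zero:
  "w \<in> U \<Longrightarrow> zero_div U v (\<lambda>u. f u - (if u \<in> V1 then g u else 0)) w = zero_div U v f w"
  using V1_inter_U sum_extend_zero_U[of g] unfolding zero_div_def by (auto simp: sum_subtractf)

lemma L_effective_minus_iff_contract:
  assumes cyc: "is_cycle e U" and bad: "bad e U (zero_div U v f)"
  shows "(\<forall>lam. effective V lam \<and> div_deg V lam = r \<longrightarrow> L_effective e V (\<lambda>u. f u - lam u))
     \<longleftrightarrow> (\<forall>lam. effective V1 lam \<and> div_deg V1 lam = r
            \<longrightarrow> L_effective e V1 (\<lambda>u. contract_div U v f u - eps v u - lam u))"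
proof (intro iffI allI impI)
  fix lam assume all: "\<forall>lam. effective V lam \<and> div_deg V lam = r \<longrightarrow> L_effective e V (\<lambda>u. f u - lam u)"
    and lam: "effective V1 lam \<and> div_deg V1 lam = r"
  define l where "l u = (if u \<in> V1 then lam u else 0)" for u
  have "effective V l" using lam unfolding effective_def l_def by auto
  moreover have "div_deg V l = r" using lam sum_V[of l] sum_extend_zero_U unfolding div_deg_def l_def by simp
  ultimately have eff: "L_effective e V (\<lambda>u. f u - l u)" using all by blast
  have "L_effective e U (zero_div U v (\<lambda>u. f u - l u)) \<longleftrightarrow> L_effective e U (zero_div U v f)"
    unfolding l_def by (rule L_effective_cong) (rule zero_div_minus_extend_zero)
  then have "bad e U (zero_div U v (\<lambda>u. f u - l u))" using bad unfolding bad_def by blast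
  then have "L_effective e V1 (\<lambda>u. contract_div U v (\<lambda>u. f u - l u) u - eps v u)"
    using eff by (rule L_effective_contract_if_bad)
  then show "L_effective e V1 (\<lambda>u. contract_div U v f u - eps v u - lam u)"
    using contract_div_extend_zero unfolding contract_div_diff l_def
    by (simp add: algebra_simps cong: L_effective_cong)
next
  fix lam assume all: "\<forall>lam. effective V1 lam \<and> div_deg V1 lam = r
      \<longrightarrow> L_effective e V1 (\<lambda>u. contract_div U v f u - eps v u - lam u)"
    and lam: "effective V lam \<and> div_deg V lam = r"
  then have "L_effective e V1 (\<lambda>u. contract_div U v f u - eps v u - contract_div U v lam u)"
    using effective_contract div_deg_contract by blast
  then have "L_effective e V1 (\<lambda>u. contract_div U v (\<lambda>u. f u - lam u) u - eps v u)"
    by (simp add: contract_div_diff algebra_simps)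
  then show "L_effective e V (\<lambda>u. f u - lam u)"
    by (rule L_effective_if_contract[OF cyc])
qed

theorem rank_eq_rank_contract:
  assumes "is_cycle e U" and "bad e U (zero_div U v f)"
  shows "rank e V f = rank e V1 (\<lambda>u. contract_div U v f u - eps v u)"
  unfolding rank_def
  using L_effective_iff_contract[OF assms] L_effective_minus_iff_contract[OF assms] by simp

end

theorem mainTheorem4:
  fixes V V1 U :: "'a set" and e :: "'a \<Rightarrow> 'a \<Rightarrow> nat" and v :: 'a and f :: "'a divisor"
  assumes "multigraph V e" and "connected_in e V"
    and "is_cut_vertex e V v"
    and "decomposes e V v V1 U"
    and "is_cycle e U"
    and "bad e U (zero_div U v f)"
  shows "rank e V f = rank e V1 (\<lambda>u. contract_div U v f u - eps v u)"
proof -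
  have "finite V" and "\<And>u w. e u w = e w u"
    using assms(1) unfolding multigraph_def by blast+
  moreover have "V = V1 \<union> U" "V1 \<inter> U = {v}" "\<forall>a\<in>V1 - {v}. \<forall>b\<in>U - {v}. e a b = 0"
    using assms(4) unfolding decomposes_def by blast+
  ultimately interpret cut_decomposition e V V1 U v
    by unfold_locales
  show ?thesis using assms(5,6) by (rule rank_eq_rank_contract)
qed

end
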